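(* There is an absolute constant $C>0$ such that for every $N\in\mathbb{N}$, all functions $f_0,f_1\colon\mathbb{Z}\to\mathbb{C}$ with $|f_i|\le1$ supported in $[\pm2N^2]$, and every $f_2\colon\mathbb{Z}\to\mathbb{C}$ with $|f_2|\le1$ supported in $[N]$, \[ \Big|\mathbb{E}_{x\in[\pm2N^2],\,n\in[N]}f_0(x)f_1(x+n^2)f_2(n)\Big|\le CN^{-1/2}\|f_2\|_{U^3}. \]
   Context: $[N]=\{1,\dots,N\}$, $[\pm N]=[-N,N]\cap\mathbb{Z}$, $\mathbb{E}_{a\in A}$ is the average over the finite set $A$. For $f\colon\mathbb{Z}\to\mathbb{C}$ and $h\in\mathbb{Z}$, $\Delta_hf(x)=f(x)\overline{f(x+h)}$, $\Delta_{h_1,\dots,h_s}=\Delta_{h_1}\cdots\Delta_{h_s}$. For finitely supported $f$, the unnormalised Gowers norm is $\|f\|_{U^s}=\big(\sum_{x,h_1,\dots,h_s\in\mathbb{Z}}\Delta_{h_1,\dots,h_s}f(x)\big)^{1/2^s}$. *)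

theory Defs
  imports "HOL-Analysis.Analysis"
begin

definition mult_diff :: "int \<Rightarrow> (int \<Rightarrow> complex) \<Rightarrow> int \<Rightarrow> complex" where
  "mult_diff h f x = f x * cnj (f (x + h))"

fun mult_diffs :: "int list \<Rightarrow> (int \<Rightarrow> complex) \<Rightarrow> int \<Rightarrow> complex" where
  "mult_diffs [] f = f"
| "mult_diffs (h # hs) f = mult_diff h (mult_diffs hs f)"

text \<open>Unnormalised Gowers U^s norm of a finitely supported f :
  (sum over x, h_1..h_s in Z of Delta_{h_1..h_s} f(x))^(1/2^s).
  The sum has only finitely many nonzero terms for finitely supported f.\<close>
definition gowers_norm :: "nat \<Rightarrow> (int \<Rightarrow> complex) \<Rightarrow> real" where
  "gowers_norm s f =
     (Re (infsum (\<lambda>(x, hs). mult_diffs hs f x) {(x, hs). length hs = s}))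
       powr (1 / 2 ^ s)"

end

theory Submission
  imports Defs
begin

text \<open>Work modulo M = 5N^2 + 1, large enough that for x, y in [-2N^2, 2N^2] and n in [N]
  the congruence y = x + n^2 (mod M) forces equality. Expanding in additive characters mod M,
  M times the sum becomes the sum over xi of F0(xi) F1(-xi) Q(xi), where Q(xi) is the sum of
  f2(n) e(xi n^2 / M). A quadratic phase is annihilated by three multiplicative derivatives, so
  three rounds of Cauchy-Schwarz (van der Corput) give |Q(xi)| <= sqrt(2N+1) |f2|_U3, while
  Cauchy-Schwarz and Parseval bound the sum of |F0(xi) F1(-xi)| by M times the length of the
  x-range. Normalising leaves sqrt(2N+1)/N <= 2 N^(-1/2).\<close>

definition add_char :: "nat \<Rightarrow> nat \<Rightarrow> int \<Rightarrow> complex" where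
  "add_char M \<xi> t = cis (2 * pi * real \<xi> / real M * of_int t)"

lemma add_char_add: "add_char M \<xi> (a + b) = add_char M \<xi> a * add_char M \<xi> b"
  by (simp add: add_char_def cis_mult distrib_left)

lemma cnj_add_char: "cnj (add_char M \<xi> a) = add_char M \<xi> (- a)"
  by (simp add: add_char_def cis_cnj)

lemma add_char_diff: "add_char M \<xi> (a - b) = add_char M \<xi> a * cnj (add_char M \<xi> b)"
  using add_char_add[of M \<xi> a "- b"] by (simp add: cnj_add_char)

lemma sum_add_char:
  assumes M: "M > 0"
  shows "(\<Sum>\<xi><M. add_char M \<xi> k) = (if int M dvd k then of_nat M else 0)"
proof -
  define z where "z = cis (2 * pi * of_int k / real M)"
  have pow: "add_char M \<xi> k = z ^ \<xi>" for \<xi>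
    unfolding z_def Complex.DeMoivre add_char_def by (simp add: field_simps)
  show ?thesis
  proof (cases "int M dvd k")
    case True
    then obtain m where "k = int M * m" by blast
    with M have "2 * pi * of_int k / real M = 2 * pi * of_int m" by simp
    then have "z = 1" unfolding z_def by simp
    with True show ?thesis by (simp add: pow)
  next
    case False
    have "z \<noteq> 1"
    proof
      assume "z = 1"
      then have "cos (2 * pi * of_int k / real M) = 1" by (simp add: z_def complex_eq_iff)
      then obtain n :: int where "2 * pi * of_int k / real M = of_int n * 2 * pi"
        by (auto simp: cos_one_2pi_int)
      with M have "real_of_int k = of_int (n * int M)" by (simp add: field_simps)
      with False show False by (metis dvd_triv_right of_int_eq_iff)
    qed
    have "z ^ M = 1"
      using M by (simp add: z_def Complex.DeMoivre cis_multiple_2pi)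
    have "(\<Sum>\<xi><M. add_char M \<xi> k) = (z ^ M - 1) / (z - 1)"
      by (simp add: pow geometric_sum[OF \<open>z \<noteq> 1\<close>])
    with \<open>z ^ M = 1\<close> False show ?thesis by simp
  qed
qed

lemma sum_add_char_small:
  assumes "M > 0" and "\<bar>k\<bar> < int M"
  shows "(\<Sum>\<xi><M. add_char M \<xi> k) = (if k = 0 then of_nat M else 0)"
  using assms dvd_imp_le_int[of k "int M"] by (auto simp: sum_add_char)

lemma add_char_parseval:
  assumes M: "M > 0" and "finite I" and close: "\<And>x y. x \<in> I \<Longrightarrow> y \<in> I \<Longrightarrow> \<bar>x - y\<bar> < int M"
  shows "(\<Sum>\<xi><M. (cmod (\<Sum>x\<in>I. c x * add_char M \<xi> x))\<^sup>2) = real M * (\<Sum>x\<in>I. (cmod (c x))\<^sup>2)"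
proof -
  have "complex_of_real (\<Sum>\<xi><M. (cmod (\<Sum>x\<in>I. c x * add_char M \<xi> x))\<^sup>2)
      = (\<Sum>\<xi><M. \<Sum>x\<in>I. \<Sum>y\<in>I. c x * cnj (c y) * add_char M \<xi> (x - y))"
    by (simp only: of_real_sum complex_norm_square)
      (simp add: add_char_diff sum_distrib_left sum_distrib_right cnj_sum mult_ac,
       rule sum.cong[OF refl], rule sum.swap)
  also have "\<dots> = (\<Sum>x\<in>I. \<Sum>y\<in>I. c x * cnj (c y) * (\<Sum>\<xi><M. add_char M \<xi> (x - y)))"
    by (simp add: sum_distrib_left sum.swap[of _ "{..<M}"])
  also have "\<dots> = (\<Sum>x\<in>I. \<Sum>y\<in>I. if y = x then of_nat M * (c x * cnj (c x)) else 0)"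
    using close by (intro sum.cong refl) (auto simp: sum_add_char_small[OF M])
  also have "\<dots> = complex_of_real (real M * (\<Sum>x\<in>I. (cmod (c x))\<^sup>2))"
    using \<open>finite I\<close> by (simp add: sum_distrib_left flip: complex_norm_square)
  finally show ?thesis by (simp only: of_real_eq_iff)
qed

lemma add_char_parseval_le_card:
  assumes "M > 0" and "finite I" and "\<And>x y. x \<in> I \<Longrightarrow> y \<in> I \<Longrightarrow> \<bar>x - y\<bar> < int M"
    and "\<And>x. cmod (c x) \<le> 1"
  shows "(\<Sum>\<xi><M. (cmod (\<Sum>x\<in>I. c x * add_char M \<xi> x))\<^sup>2) \<le> real M * real (card I)"
proof -
  have "(\<Sum>x\<in>I. (cmod (c x))\<^sup>2) \<le> (\<Sum>x\<in>I. 1)"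
    using assms(4) by (intro sum_mono) (simp add: abs_square_le_1)
  then show ?thesis
    using assms by (simp add: add_char_parseval)
qed

lemma sum_shift_eq_sum_add_char:
  fixes f0 f1 f2 :: "int \<Rightarrow> complex" and P :: "int \<Rightarrow> int"
  assumes M: "M > 0" and "finite I" and "finite X"
    and close: "\<And>x y n. x \<in> I \<Longrightarrow> y \<in> I \<Longrightarrow> n \<in> X \<Longrightarrow> \<bar>x - y + P n\<bar> < int M"
    and supp1: "\<And>y. y \<notin> I \<Longrightarrow> f1 y = 0"
  shows "of_nat M * (\<Sum>x\<in>I. \<Sum>n\<in>X. f0 x * f1 (x + P n) * f2 n)
    = (\<Sum>\<xi><M. (\<Sum>x\<in>I. f0 x * add_char M \<xi> x) * (\<Sum>y\<in>I. f1 y * add_char M \<xi> (- y))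
          * (\<Sum>n\<in>X. f2 n * add_char M \<xi> (P n)))"
proof -
  have "(\<Sum>\<xi><M. (\<Sum>x\<in>I. f0 x * add_char M \<xi> x) * (\<Sum>y\<in>I. f1 y * add_char M \<xi> (- y))
          * (\<Sum>n\<in>X. f2 n * add_char M \<xi> (P n)))
      = (\<Sum>\<xi><M. \<Sum>x\<in>I. \<Sum>y\<in>I. \<Sum>n\<in>X. f0 x * f1 y * f2 n * add_char M \<xi> (x - y + P n))"
    by (simp add: add_char_add add_char_diff sum_distrib_left sum_distrib_right mult_ac
        flip: cnj_add_char)
      (rule sum.cong[OF refl], rule sum.swap)
  also have "\<dots> = (\<Sum>x\<in>I. \<Sum>y\<in>I. \<Sum>n\<in>X. f0 x * f1 y * f2 n * (\<Sum>\<xi><M. add_char M \<xi> (x - y + P n)))"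
    by (simp add: sum_distrib_left sum.swap[of _ "{..<M}"])
  also have "\<dots> = (\<Sum>x\<in>I. \<Sum>y\<in>I. \<Sum>n\<in>X. if y = x + P n then of_nat M * (f0 x * f1 y * f2 n) else 0)"
    using close by (intro sum.cong refl) (auto simp: sum_add_char_small[OF M])
  also have "\<dots> = (\<Sum>x\<in>I. \<Sum>n\<in>X. \<Sum>y\<in>I. if y = x + P n then of_nat M * (f0 x * f1 y * f2 n) else 0)"
    by (rule sum.cong[OF refl], rule sum.swap)
  also have "\<dots> = (\<Sum>x\<in>I. \<Sum>n\<in>X. of_nat M * (f0 x * f1 (x + P n) * f2 n))"
    using \<open>finite I\<close> supp1 by (intro sum.cong refl) auto
  finally show ?thesis by (simp add: sum_distrib_left)
qed

lemma norm_sum_shift_le: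
  fixes f0 f1 f2 :: "int \<Rightarrow> complex" and P :: "int \<Rightarrow> int"
  assumes M: "M > 0" and I: "finite I" and X: "finite X"
    and close_I: "\<And>x y. x \<in> I \<Longrightarrow> y \<in> I \<Longrightarrow> \<bar>x - y\<bar> < int M"
    and close: "\<And>x y n. x \<in> I \<Longrightarrow> y \<in> I \<Longrightarrow> n \<in> X \<Longrightarrow> \<bar>x - y + P n\<bar> < int M"
    and f0: "\<And>x. cmod (f0 x) \<le> 1" and f1: "\<And>x. cmod (f1 x) \<le> 1"
    and supp1: "\<And>y. y \<notin> I \<Longrightarrow> f1 y = 0"
    and f2: "\<And>\<xi>. cmod (\<Sum>n\<in>X. f2 n * add_char M \<xi> (P n)) \<le> Q"
  shows "cmod (\<Sum>x\<in>I. \<Sum>n\<in>X. f0 x * f1 (x + P n) * f2 n) \<le> Q * real (card I)"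
proof -
  define a where "a \<xi> = cmod (\<Sum>x\<in>I. f0 x * add_char M \<xi> x)" for \<xi>
  define b where "b \<xi> = cmod (\<Sum>y\<in>I. f1 y * add_char M \<xi> (- y))" for \<xi>
  have "Q \<ge> 0" using f2 norm_ge_zero order_trans by blast
  have b_cnj: "b \<xi> = cmod (\<Sum>y\<in>I. cnj (f1 y) * add_char M \<xi> y)" for \<xi>
    unfolding b_def by (subst complex_mod_cnj[symmetric]) (simp add: cnj_sum cnj_add_char)
  have sum_a: "(\<Sum>\<xi><M. (a \<xi>)\<^sup>2) \<le> real M * real (card I)"
    unfolding a_def by (rule add_char_parseval_le_card) (simp_all add: M I close_I f0)
  have sum_b: "(\<Sum>\<xi><M. (b \<xi>)\<^sup>2) \<le> real M * real (card I)"
    unfolding b_cnj by (rule add_char_parseval_le_card) (simp_all add: M I close_I f1)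
  have fourier: "of_nat M * (\<Sum>x\<in>I. \<Sum>n\<in>X. f0 x * f1 (x + P n) * f2 n)
    = (\<Sum>\<xi><M. (\<Sum>x\<in>I. f0 x * add_char M \<xi> x) * (\<Sum>y\<in>I. f1 y * add_char M \<xi> (- y))
          * (\<Sum>n\<in>X. f2 n * add_char M \<xi> (P n)))"
    by (rule sum_shift_eq_sum_add_char) (simp_all add: M I X close supp1)
  have "real M * cmod (\<Sum>x\<in>I. \<Sum>n\<in>X. f0 x * f1 (x + P n) * f2 n)
      = cmod (of_nat M * (\<Sum>x\<in>I. \<Sum>n\<in>X. f0 x * f1 (x + P n) * f2 n))"
    by (simp add: norm_mult)
  also have "\<dots> \<le> (\<Sum>\<xi><M. a \<xi> * b \<xi> * cmod (\<Sum>n\<in>X. f2 n * add_char M \<xi> (P n)))"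
    unfolding fourier a_def b_def by (rule order_trans[OF norm_sum]) (simp add: norm_mult)
  also have "\<dots> \<le> (\<Sum>\<xi><M. ((a \<xi>)\<^sup>2 + (b \<xi>)\<^sup>2) / 2 * Q)"
  proof (rule sum_mono)
    fix \<xi>
    have "a \<xi> * b \<xi> \<le> ((a \<xi>)\<^sup>2 + (b \<xi>)\<^sup>2) / 2"
      using sum_squares_bound[of "a \<xi>" "b \<xi>"] by simp
    then show "a \<xi> * b \<xi> * cmod (\<Sum>n\<in>X. f2 n * add_char M \<xi> (P n)) \<le> ((a \<xi>)\<^sup>2 + (b \<xi>)\<^sup>2) / 2 * Q"
      using f2 by (intro mult_mono) (auto simp: a_def b_def)
  qed
  also have "\<dots> = ((\<Sum>\<xi><M. (a \<xi>)\<^sup>2) + (\<Sum>\<xi><M. (b \<xi>)\<^sup>2)) / 2 * Q"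
    by (simp add: sum.distrib flip: sum_distrib_right sum_divide_distrib)
  also have "\<dots> \<le> real M * (Q * real (card I))"
    using mult_right_mono[OF add_mono[OF sum_a sum_b] \<open>Q \<ge> 0\<close>] by (simp add: algebra_simps)
  finally show ?thesis using M by simp
qed

lemma mult_diff_eq_0_left: "G x = 0 \<Longrightarrow> mult_diff h G x = 0"
  by (simp add: mult_diff_def)

lemma mult_diff_eq_0_right: "G (x + h) = 0 \<Longrightarrow> mult_diff h G x = 0"
  by (simp add: mult_diff_def)

lemma mult_diffs_3_eq_0:
  assumes "g x = 0 \<or> g (x + a) = 0 \<or> g (x + b) = 0 \<or> g (x + c) = 0"
  shows "mult_diffs [a, b, c] g x = 0"
  using assms
proof (elim disjE)
  assume "g (x + a) = 0"
  then have "mult_diff b (mult_diff c g) (x + a) = 0" by (simp add: mult_diff_eq_0_left)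
  then show ?thesis by (simp add: mult_diff_eq_0_right)
next
  assume "g (x + b) = 0"
  then have "mult_diff b (mult_diff c g) x = 0"
    by (intro mult_diff_eq_0_right mult_diff_eq_0_left)
  then show ?thesis by (simp add: mult_diff_eq_0_left)
qed (simp_all add: mult_diff_eq_0_left mult_diff_eq_0_right)

lemma sum_mult_diff_eq_norm_power2:
  fixes G :: "int \<Rightarrow> complex"
  assumes "finite X" and "finite H"
    and supp: "\<And>x. x \<notin> X \<Longrightarrow> G x = 0"
    and diff: "\<And>x y. x \<in> X \<Longrightarrow> y \<in> X \<Longrightarrow> y - x \<in> H"
  shows "(\<Sum>h\<in>H. \<Sum>x\<in>X. mult_diff h G x) = of_real ((cmod (\<Sum>x\<in>X. G x))\<^sup>2)"
proof -
  have shift: "(\<Sum>h\<in>H. G x * cnj (G (x + h))) = (\<Sum>y\<in>X. G x * cnj (G y))" if "x \<in> X" for x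
  proof -
    have "(\<Sum>h\<in>H. G x * cnj (G (x + h))) = (\<Sum>y\<in>(+) x ` H. G x * cnj (G y))"
      by (simp add: sum.reindex)
    also have "\<dots> = (\<Sum>y\<in>X. G x * cnj (G y))"
    proof (rule sum.mono_neutral_right)
      show "X \<subseteq> (+) x ` H"
        using diff[OF \<open>x \<in> X\<close>] by (force intro: rev_image_eqI)
    qed (use \<open>finite H\<close> supp in auto)
    finally show ?thesis .
  qed
  have "(\<Sum>h\<in>H. \<Sum>x\<in>X. mult_diff h G x) = (\<Sum>x\<in>X. \<Sum>h\<in>H. G x * cnj (G (x + h)))"
    by (subst sum.swap) (simp add: mult_diff_def)
  also have "\<dots> = (\<Sum>x\<in>X. \<Sum>y\<in>X. G x * cnj (G y))"
    by (intro sum.cong refl shift)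
  also have "\<dots> = (\<Sum>x\<in>X. G x) * cnj (\<Sum>x\<in>X. G x)"
    by (simp add: sum_distrib_left sum_distrib_right cnj_sum) (rule sum.swap)
  finally show ?thesis by (simp only: complex_norm_square)
qed

lemma norm_power2_le_sum_norm_mult_diff:
  fixes G :: "int \<Rightarrow> complex"
  assumes "finite X" and "finite H"
    and "\<And>x. x \<notin> X \<Longrightarrow> G x = 0"
    and "\<And>x y. x \<in> X \<Longrightarrow> y \<in> X \<Longrightarrow> y - x \<in> H"
  shows "(cmod (\<Sum>x\<in>X. G x))\<^sup>2 \<le> (\<Sum>h\<in>H. cmod (\<Sum>x\<in>X. mult_diff h G x))"
proof -
  have "(cmod (\<Sum>x\<in>X. G x))\<^sup>2 = cmod (\<Sum>h\<in>H. \<Sum>x\<in>X. mult_diff h G x)"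
    by (simp add: sum_mult_diff_eq_norm_power2[OF assms] del: of_real_power)
  also have "\<dots> \<le> (\<Sum>h\<in>H. cmod (\<Sum>x\<in>X. mult_diff h G x))"
    by (rule norm_sum)
  finally show ?thesis .
qed

lemma power2_le_card_mult_sum_power2:
  fixes b :: "'a \<Rightarrow> real"
  assumes "0 \<le> a" and "a \<le> (\<Sum>h\<in>H. b h)"
  shows "a\<^sup>2 \<le> real (card H) * (\<Sum>h\<in>H. (b h)\<^sup>2)"
proof -
  have "a\<^sup>2 \<le> (\<Sum>h\<in>H. b h)\<^sup>2" using assms by (simp add: power_mono)
  also have "\<dots> \<le> (\<Sum>h\<in>H. (b h)\<^sup>2) * real (card H)" by (rule sum_squared_le_sum_of_squares)
  finally show ?thesis by (simp only: mult.commute)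
qed

lemma infsum_mult_diffs_3:
  fixes g :: "int \<Rightarrow> complex"
  assumes X: "finite X" and H: "finite H"
    and supp: "\<And>x. x \<notin> X \<Longrightarrow> g x = 0"
    and diff: "\<And>x y. x \<in> X \<Longrightarrow> y \<in> X \<Longrightarrow> y - x \<in> H"
  shows "infsum (\<lambda>(x, hs). mult_diffs hs g x) {(x, hs). length hs = 3}
    = (\<Sum>h3\<in>H. \<Sum>h2\<in>H. \<Sum>h1\<in>H. \<Sum>x\<in>X. mult_diffs [h1, h2, h3] g x)"
proof -
  define \<phi> where "\<phi> = (\<lambda>(h3::int, h2::int, h1::int, x::int). (x, [h1, h2, h3]))"
  define F where "F = (\<lambda>(x, hs). mult_diffs hs g x)"
  have outside: "F (x, hs) = 0" if "(x, hs) \<notin> \<phi> ` (H \<times> H \<times> H \<times> X)" and "length hs = 3" for x hs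
  proof -
    from \<open>length hs = 3\<close> obtain a b c where hs: "hs = [a, b, c]"
      by (auto simp: numeral_3_eq_3 length_Suc_conv)
    have "(c, b, a, x) \<notin> H \<times> H \<times> H \<times> X"
    proof
      assume "(c, b, a, x) \<in> H \<times> H \<times> H \<times> X"
      then have "\<phi> (c, b, a, x) \<in> \<phi> ` (H \<times> H \<times> H \<times> X)" by (rule imageI)
      with that(1) show False by (simp add: \<phi>_def hs)
    qed
    then have "g x = 0 \<or> g (x + a) = 0 \<or> g (x + b) = 0 \<or> g (x + c) = 0"
      using supp diff by (metis SigmaI add_diff_cancel_left')
    then have "mult_diffs hs g x = 0" unfolding hs by (rule mult_diffs_3_eq_0)
    then show ?thesis by (simp add: F_def)
  qed
  have "infsum F {(x, hs). length hs = 3} = infsum F (\<phi> ` (H \<times> H \<times> H \<times> X))"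
    by (rule infsum_cong_neutral) (auto simp: \<phi>_def outside)
  also have "\<dots> = sum F (\<phi> ` (H \<times> H \<times> H \<times> X))"
    using X H by simp
  also have "\<dots> = sum (F \<circ> \<phi>) (H \<times> H \<times> H \<times> X)"
    by (rule sum.reindex) (auto simp: inj_on_def \<phi>_def)
  also have "\<dots> = (\<Sum>h3\<in>H. \<Sum>h2\<in>H. \<Sum>h1\<in>H. \<Sum>x\<in>X. mult_diffs [h1, h2, h3] g x)"
    by (simp add: F_def \<phi>_def sum.cartesian_product split_def)
  finally show ?thesis by (simp add: F_def)
qed

lemma gowers_norm_3_eq_sum:
  fixes g :: "int \<Rightarrow> complex"
  assumes "finite X" and "finite H"
    and supp: "\<And>x. x \<notin> X \<Longrightarrow> g x = 0"
    and "\<And>x y. x \<in> X \<Longrightarrow> y \<in> X \<Longrightarrow> y - x \<in> H"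
  shows "gowers_norm 3 g
    = (\<Sum>h3\<in>H. \<Sum>h2\<in>H. (cmod (\<Sum>x\<in>X. mult_diff h2 (mult_diff h3 g) x))\<^sup>2) powr (1 / 8)"
proof -
  have "(\<Sum>h1\<in>H. \<Sum>x\<in>X. mult_diffs [h1, h2, h3] g x)
      = of_real ((cmod (\<Sum>x\<in>X. mult_diff h2 (mult_diff h3 g) x))\<^sup>2)" for h2 h3
    using sum_mult_diff_eq_norm_power2[OF assms(1,2) _ assms(4), of "mult_diff h2 (mult_diff h3 g)"]
    by (simp add: supp mult_diff_eq_0_left)
  then show ?thesis
    by (simp add: gowers_norm_def infsum_mult_diffs_3[OF assms] flip: of_real_sum)
qed

lemma norm_sum_power8_le:
  fixes g :: "int \<Rightarrow> complex"
  assumes X: "finite X" and H: "finite H"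
    and supp: "\<And>x. x \<notin> X \<Longrightarrow> g x = 0"
    and diff: "\<And>x y. x \<in> X \<Longrightarrow> y \<in> X \<Longrightarrow> y - x \<in> H"
  shows "(cmod (\<Sum>x\<in>X. g x)) ^ 8
    \<le> real (card H) ^ 4 * (\<Sum>h3\<in>H. \<Sum>h2\<in>H. (cmod (\<Sum>x\<in>X. mult_diff h2 (mult_diff h3 g) x))\<^sup>2)"
proof -
  define K where "K = real (card H)"
  define s where "s = cmod (\<Sum>x\<in>X. g x)"
  define v where "v h3 = cmod (\<Sum>x\<in>X. mult_diff h3 g x)" for h3
  define u where "u h3 h2 = cmod (\<Sum>x\<in>X. mult_diff h2 (mult_diff h3 g) x)" for h3 h2
  have "K \<ge> 0" by (simp add: K_def)
  have "s\<^sup>2 \<le> (\<Sum>h3\<in>H. v h3)"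
    unfolding s_def v_def by (rule norm_power2_le_sum_norm_mult_diff[OF X H supp diff])
  then have s4: "s ^ 4 \<le> K * (\<Sum>h3\<in>H. (v h3)\<^sup>2)"
    using power2_le_card_mult_sum_power2[where a = "s\<^sup>2" and b = v] by (simp add: K_def)
  have v4: "v h3 ^ 4 \<le> K * (\<Sum>h2\<in>H. (u h3 h2)\<^sup>2)" for h3
  proof -
    have "(v h3)\<^sup>2 \<le> (\<Sum>h2\<in>H. u h3 h2)"
      unfolding v_def u_def
      by (rule norm_power2_le_sum_norm_mult_diff[OF X H _ diff]) (simp add: supp mult_diff_eq_0_left)
    then show ?thesis
      using power2_le_card_mult_sum_power2[where a = "(v h3)\<^sup>2" and b = "u h3"] by (simp add: K_def)
  qed
  have "s ^ 4 \<le> (\<Sum>h3\<in>H. K * (v h3)\<^sup>2)"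
    using s4 by (simp add: sum_distrib_left)
  then have "(s ^ 4)\<^sup>2 \<le> K * (\<Sum>h3\<in>H. (K * (v h3)\<^sup>2)\<^sup>2)"
    using power2_le_card_mult_sum_power2[where a = "s ^ 4"] by (simp add: K_def)
  also have "\<dots> = K ^ 3 * (\<Sum>h3\<in>H. v h3 ^ 4)"
    by (simp add: sum_distrib_left power_mult_distrib eval_nat_numeral mult_ac)
  also have "\<dots> \<le> K ^ 3 * (\<Sum>h3\<in>H. K * (\<Sum>h2\<in>H. (u h3 h2)\<^sup>2))"
    using \<open>K \<ge> 0\<close> v4 by (intro mult_left_mono sum_mono) auto
  also have "\<dots> = K ^ 4 * (\<Sum>h3\<in>H. \<Sum>h2\<in>H. (u h3 h2)\<^sup>2)"
    by (simp add: eval_nat_numeral mult_ac flip: sum_distrib_left)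
  finally show ?thesis by (simp add: s_def K_def u_def)
qed

lemma norm_sum_le_gowers_norm_3:
  fixes g :: "int \<Rightarrow> complex"
  assumes "finite X" and "finite H"
    and "\<And>x. x \<notin> X \<Longrightarrow> g x = 0"
    and "\<And>x y. x \<in> X \<Longrightarrow> y \<in> X \<Longrightarrow> y - x \<in> H"
  shows "cmod (\<Sum>x\<in>X. g x) \<le> sqrt (real (card H)) * gowers_norm 3 g"
proof -
  define R where "R = (\<Sum>h3\<in>H. \<Sum>h2\<in>H. (cmod (\<Sum>x\<in>X. mult_diff h2 (mult_diff h3 g) x))\<^sup>2)"
  have "R \<ge> 0" by (simp add: R_def sum_nonneg)
  have "sqrt (real (card H)) ^ 8 = real (card H) ^ 4"
    using power_mult[of "sqrt (real (card H))" 2 4] by simp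
  moreover have "(R powr (1 / 8)) ^ 8 = R"
    using \<open>R \<ge> 0\<close> by (cases "R = 0") (simp_all flip: powr_realpow add: powr_powr)
  ultimately have "(sqrt (real (card H)) * R powr (1 / 8)) ^ 8 = real (card H) ^ 4 * R"
    by (simp add: power_mult_distrib)
  then have "(cmod (\<Sum>x\<in>X. g x)) ^ 8 \<le> (sqrt (real (card H)) * R powr (1 / 8)) ^ 8"
    using norm_sum_power8_le[OF assms] by (simp add: R_def)
  then show ?thesis
    by (simp add: gowers_norm_3_eq_sum[OF assms] R_def power_mono_iff)
qed

lemma mult_diffs_mult:
  "mult_diffs hs (\<lambda>x. f x * p x) = (\<lambda>x. mult_diffs hs f x * mult_diffs hs p x)"
  by (induction hs) (auto simp: mult_diff_def fun_eq_iff mult_ac)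

lemma mult_diffs_3_quadratic_phase:
  "mult_diffs [a, b, c] (\<lambda>n. cis (t * of_int (n\<^sup>2))) x = 1"
  by (simp add: mult_diff_def cis_cnj cis_mult algebra_simps power2_eq_square)

lemma gowers_norm_3_mult_quadratic_phase:
  "gowers_norm 3 (\<lambda>n. f n * cis (t * of_int (n\<^sup>2))) = gowers_norm 3 f"
proof -
  have "mult_diffs hs (\<lambda>n. f n * cis (t * of_int (n\<^sup>2))) x = mult_diffs hs f x"
    if "length hs = 3" for x hs
  proof -
    from that obtain a b c where "hs = [a, b, c]"
      by (auto simp: numeral_3_eq_3 length_Suc_conv)
    then show ?thesis by (simp only: mult_diffs_mult mult_diffs_3_quadratic_phase mult_1_right)
  qed
  then show ?thesis
    unfolding gowers_norm_def by (intro arg_cong[where f = "\<lambda>z. Re z powr _"] infsum_cong) auto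
qed

lemma norm_sum_quadratic_shift_le:
  fixes N :: nat and f0 f1 f2 :: "int \<Rightarrow> complex"
  assumes f0: "\<And>x. cmod (f0 x) \<le> 1" and f1: "\<And>x. cmod (f1 x) \<le> 1"
    and supp1: "\<And>x. x \<notin> {- 2 * int N ^ 2 .. 2 * int N ^ 2} \<Longrightarrow> f1 x = 0"
    and supp2: "\<And>x. x \<notin> {1 .. int N} \<Longrightarrow> f2 x = 0"
  shows "cmod (\<Sum>x \<in> {- 2 * int N ^ 2 .. 2 * int N ^ 2}. \<Sum>n \<in> {1 .. int N}. f0 x * f1 (x + n ^ 2) * f2 n)
    \<le> sqrt (real (2 * N + 1)) * gowers_norm 3 f2 * real (card {- 2 * int N ^ 2 .. 2 * int N ^ 2})"
proof (rule norm_sum_shift_le[where P = "\<lambda>n. n\<^sup>2" and M = "5 * N\<^sup>2 + 1"])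
  fix \<xi>
  define t where "t = 2 * pi * real \<xi> / real (5 * N\<^sup>2 + 1)"
  have "(\<Sum>n \<in> {1 .. int N}. f2 n * add_char (5 * N\<^sup>2 + 1) \<xi> (n\<^sup>2))
      = (\<Sum>n \<in> {1 .. int N}. f2 n * cis (t * of_int (n\<^sup>2)))"
    by (simp add: add_char_def t_def)
  also have "cmod \<dots> \<le> sqrt (real (card {- int N .. int N})) * gowers_norm 3 (\<lambda>n. f2 n * cis (t * of_int (n\<^sup>2)))"
    by (rule norm_sum_le_gowers_norm_3) (simp_all add: supp2)
  finally show "cmod (\<Sum>n \<in> {1 .. int N}. f2 n * add_char (5 * N\<^sup>2 + 1) \<xi> (n\<^sup>2))
      \<le> sqrt (real (2 * N + 1)) * gowers_norm 3 f2"
    unfolding gowers_norm_3_mult_quadratic_phase by (simp add: add.commute)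
next
  fix x y n :: int
  assume "x \<in> {- 2 * int N ^ 2 .. 2 * int N ^ 2}" "y \<in> {- 2 * int N ^ 2 .. 2 * int N ^ 2}" "n \<in> {1 .. int N}"
  moreover from \<open>n \<in> {1 .. int N}\<close> have "n\<^sup>2 \<le> int N ^ 2"
    by (auto intro: power_mono)
  moreover have "int (5 * N\<^sup>2 + 1) = 5 * int N ^ 2 + 1" by simp
  ultimately show "\<bar>x - y + n\<^sup>2\<bar> < int (5 * N\<^sup>2 + 1)"
    unfolding atLeastAtMost_iff abs_less_iff by (smt (verit) zero_le_power2)
next
  fix x y :: int
  assume "x \<in> {- 2 * int N ^ 2 .. 2 * int N ^ 2}" "y \<in> {- 2 * int N ^ 2 .. 2 * int N ^ 2}"
  moreover have "int (5 * N\<^sup>2 + 1) = 5 * int N ^ 2 + 1" by simp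
  ultimately show "\<bar>x - y\<bar> < int (5 * N\<^sup>2 + 1)"
    unfolding atLeastAtMost_iff abs_less_iff by (smt (verit) zero_le_power2)
qed (simp_all add: f0 f1 supp1)

lemma sqrt_2N_plus_1_div_le:
  assumes "N \<ge> 1"
  shows "sqrt (real (2 * N + 1)) / real N \<le> 2 * real N powr (- 1 / 2)"
proof -
  have "sqrt (real (2 * N + 1)) \<le> sqrt (4 * real N)" using assms by simp
  also have "\<dots> = 2 * sqrt (real N)" by (simp add: real_sqrt_mult)
  finally have "sqrt (real (2 * N + 1)) / real N \<le> 2 * sqrt (real N) / real N"
    using assms by (simp add: divide_right_mono)
  also have "\<dots> = 2 * real N powr (- 1 / 2)"
    using assms by (simp add: powr_minus_divide powr_half_sqrt field_simps flip: real_sqrt_mult)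
  finally show ?thesis .
qed

theorem lemma3p5:
  shows "\<exists>C::real. C > 0 \<and>
    (\<forall>(N::nat) (f0::int \<Rightarrow> complex) (f1::int \<Rightarrow> complex) (f2::int \<Rightarrow> complex).
       N \<ge> 1 \<longrightarrow>
       (\<forall>x. cmod (f0 x) \<le> 1) \<longrightarrow> (\<forall>x. cmod (f1 x) \<le> 1) \<longrightarrow> (\<forall>x. cmod (f2 x) \<le> 1) \<longrightarrow>
       (\<forall>x. x \<notin> {- 2 * int N ^ 2 .. 2 * int N ^ 2} \<longrightarrow> f0 x = 0) \<longrightarrow>
       (\<forall>x. x \<notin> {- 2 * int N ^ 2 .. 2 * int N ^ 2} \<longrightarrow> f1 x = 0) \<longrightarrow>
       (\<forall>x. x \<notin> {1 .. int N} \<longrightarrow> f2 x = 0) \<longrightarrow>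
       cmod ((\<Sum>x \<in> {- 2 * int N ^ 2 .. 2 * int N ^ 2}. \<Sum>n \<in> {1 .. int N}.
                 f0 x * f1 (x + n ^ 2) * f2 n)
             / of_nat (card {- 2 * int N ^ 2 .. 2 * int N ^ 2} * card {1 .. int N}))
         \<le> C * real N powr (- 1 / 2) * gowers_norm 3 f2)"
proof (rule exI[of _ 2], intro conjI allI impI)
  fix N :: nat and f0 f1 f2 :: "int \<Rightarrow> complex"
  assume N: "N \<ge> 1" and f0: "\<forall>x. cmod (f0 x) \<le> 1" and f1: "\<forall>x. cmod (f1 x) \<le> 1"
    and "\<forall>x. cmod (f2 x) \<le> 1" and "\<forall>x. x \<notin> {- 2 * int N ^ 2 .. 2 * int N ^ 2} \<longrightarrow> f0 x = 0"
    and supp1: "\<forall>x. x \<notin> {- 2 * int N ^ 2 .. 2 * int N ^ 2} \<longrightarrow> f1 x = 0"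
    and supp2: "\<forall>x. x \<notin> {1 .. int N} \<longrightarrow> f2 x = 0"
  define I where "I = {- 2 * int N ^ 2 .. 2 * int N ^ 2}"
  define S where "S = (\<Sum>x \<in> I. \<Sum>n \<in> {1 .. int N}. f0 x * f1 (x + n ^ 2) * f2 n)"
  define G where "G = gowers_norm 3 f2"
  have "card I > 0" by (auto simp: I_def card_gt_0_iff intro!: exI[of _ 0])
  have "G \<ge> 0" by (simp add: G_def gowers_norm_def)
  have "cmod S \<le> sqrt (real (2 * N + 1)) * G * real (card I)"
    unfolding S_def G_def I_def by (rule norm_sum_quadratic_shift_le) (use f0 f1 supp1 supp2 in auto)
  then have "cmod S / (real (card I) * real N) \<le> sqrt (real (2 * N + 1)) / real N * G"
    using \<open>card I > 0\<close> N by (simp add: field_simps)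
  then have "cmod (S / of_nat (card I * card {1 .. int N})) \<le> sqrt (real (2 * N + 1)) / real N * G"
    by (simp add: norm_divide norm_mult)
  also have "\<dots> \<le> 2 * real N powr (- 1 / 2) * G"
    using sqrt_2N_plus_1_div_le[OF N] \<open>G \<ge> 0\<close> by (rule mult_right_mono)
  finally show "cmod (S / of_nat (card I * card {1 .. int N})) \<le> 2 * real N powr (- 1 / 2) * G" .
qed simp

end
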